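(* Let $X,Y\in\mathcal{H}$ be random variables, $\mathbb{E}$ a sub-linear expectation and $(\mathbb{V},v)$ the pair of capacities generated by $\mathbb{E}$. If $X$ is independent of $Y$ under $\mathbb{E}$, then for all Borel sets $D,G\subset\mathbb{R}$, $$\mathbb{V}(X\in D,Y\in G)=\mathbb{V}(X\in D)\,\mathbb{V}(Y\in G)\quad\text{and}\quad v(X\in D,Y\in G)=v(X\in D)\,v(Y\in G),$$ i.e. $X$ is pairwise independent of $Y$ under both $\mathbb{V}$ and $v$.
   Context: Let $(\Omega,\mathcal{F})$ be a measurable space, $\mathcal{P}$ a nonempty set of probability measures on it, and $\mathcal{H}$ a set of real random variables on $(\Omega,\mathcal{F})$ containing indicator-type functions of the random variables considered. The sub-linear expectation is $\mathbb{E}[\xi]:=\sup_{P\in\mathcal{P}}E_P[\xi]$; it generates the capacities $\mathbb{V}(A):=\mathbb{E}[I_A]=\sup_{P\in\mathcal{P}}P(A)$ and $v(A):=-\mathbb{E}[-I_A]=\inf_{P\in\mathcal{P}}P(A)$. Independence (Peng): $X$ is independent of $Y$ under $\mathbb{E}$ if for every measurable $\varphi$ on $\mathbb{R}^2$ (with relevant quantities in $\mathcal{H}$), $\mathbb{E}[\varphi(Y,X)]=\mathbb{E}[\overline{\varphi}(Y)]$ with $\overline{\varphi}(y):=\mathbb{E}[\varphi(y,X)]$. *)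

theory Defs
  imports "HOL-Probability.Probability"
begin

definition sublin_exp :: "'a measure set \<Rightarrow> ('a \<Rightarrow> real) \<Rightarrow> real" where
  "sublin_exp \<P> \<xi> = (SUP P\<in>\<P>. integral\<^sup>L P \<xi>)"

definition upper_cap :: "'a measure set \<Rightarrow> 'a set \<Rightarrow> real" where
  "upper_cap \<P> A = sublin_exp \<P> (indicator A)"

definition lower_cap :: "'a measure set \<Rightarrow> 'a set \<Rightarrow> real" where
  "lower_cap \<P> A = - sublin_exp \<P> (\<lambda>\<omega>. - indicator A \<omega>)"

text \<open>Peng independence: X is independent of Y under E. For every Borel
  \<phi> on R^2 such that the relevant quantities lie in H:
  E[\<phi>(Y,X)] = E[\<phi>bar(Y)] where \<phi>bar(y) = E[\<phi>(y,X)].\<close>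
definition peng_indep ::
  "'a measure set \<Rightarrow> ('a \<Rightarrow> real) set \<Rightarrow> ('a \<Rightarrow> real) \<Rightarrow> ('a \<Rightarrow> real) \<Rightarrow> bool" where
  "peng_indep \<P> \<H> X Y \<longleftrightarrow>
     (\<forall>\<phi> :: real \<times> real \<Rightarrow> real. \<phi> \<in> borel_measurable borel \<longrightarrow>
        (\<lambda>\<omega>. \<phi> (Y \<omega>, X \<omega>)) \<in> \<H> \<longrightarrow>
        (\<forall>y. (\<lambda>\<omega>. \<phi> (y, X \<omega>)) \<in> \<H>) \<longrightarrow>
        (\<lambda>\<omega>. sublin_exp \<P> (\<lambda>\<omega>'. \<phi> (Y \<omega>, X \<omega>'))) \<in> \<H> \<longrightarrow>
        sublin_exp \<P> (\<lambda>\<omega>. \<phi> (Y \<omega>, X \<omega>)) =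
        sublin_exp \<P> (\<lambda>\<omega>. sublin_exp \<P> (\<lambda>\<omega>'. \<phi> (Y \<omega>, X \<omega>'))))"

end

theory Submission
  imports Defs
begin

text \<open>Both capacities are sublinear expectations of the indicator of \<open>{X \<in> D} \<inter> {Y \<in> G}\<close>,
  i.e. of \<open>\<phi>(Y, X)\<close> with \<open>\<phi>(y, x) = \<plusminus>1\<^sub>D(x) 1\<^sub>G(y)\<close>. Independence evaluates the inner
  expectation first, giving \<open>c 1\<^sub>G(y)\<close> with the constant \<open>c = \<bbbE>[\<plusminus>1\<^sub>D(X)]\<close>; since the sign
  of \<open>c\<close> is known, positive homogeneity of \<open>\<bbbE>\<close> pulls it out of the outer expectation.\<close>

lemma sublin_exp_cong:
  assumes "\<And>P \<omega>. P \<in> \<P> \<Longrightarrow> \<omega> \<in> space P \<Longrightarrow> f \<omega> = g \<omega>"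
  shows "sublin_exp \<P> f = sublin_exp \<P> g"
  unfolding sublin_exp_def
  by (rule SUP_cong[OF refl], rule Bochner_Integration.integral_cong[OF refl]) (simp add: assms)

lemma upper_cap_eq_sublin_exp:
  assumes "\<And>P. P \<in> \<P> \<Longrightarrow> space P = S"
  shows "upper_cap \<P> {\<omega>\<in>S. Q \<omega>} = sublin_exp \<P> (\<lambda>\<omega>. of_bool (Q \<omega>))"
  unfolding upper_cap_def by (rule sublin_exp_cong) (auto simp: assms)

lemma lower_cap_eq_sublin_exp:
  assumes "\<And>P. P \<in> \<P> \<Longrightarrow> space P = S"
  shows "lower_cap \<P> {\<omega>\<in>S. Q \<omega>} = - sublin_exp \<P> (\<lambda>\<omega>. - of_bool (Q \<omega>))"
  unfolding lower_cap_def by (rule arg_cong[where f = uminus], rule sublin_exp_cong) (auto simp: assms)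

locale sublinear_expectation_space =
  fixes \<P> :: "'a measure set" and \<H> :: "('a \<Rightarrow> real) set"
  assumes P_nonempty: "\<P> \<noteq> {}"
    and H_bdd: "\<And>\<xi>. \<xi> \<in> \<H> \<Longrightarrow> bdd_above ((\<lambda>P. integral\<^sup>L P \<xi>) ` \<P>)"
    and H_scale: "\<And>c \<xi>. \<xi> \<in> \<H> \<Longrightarrow> (\<lambda>\<omega>. c * \<xi> \<omega>) \<in> \<H>"
begin

lemma sublin_exp_scale:
  assumes "\<xi> \<in> \<H>" "c \<ge> 0"
  shows "sublin_exp \<P> (\<lambda>\<omega>. c * \<xi> \<omega>) = c * sublin_exp \<P> \<xi>"
proof -
  have "mono (\<lambda>x::real. c * x)"
    using assms(2) by (simp add: mono_def mult_left_mono)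
  then have "c * (SUP P\<in>\<P>. integral\<^sup>L P \<xi>) = (SUP s\<in>(\<lambda>P. integral\<^sup>L P \<xi>) ` \<P>. c * s)"
    by (rule continuous_at_Sup_mono)
      (auto intro!: continuous_intros simp: P_nonempty H_bdd[OF assms(1)])
  then show ?thesis
    by (simp add: sublin_exp_def image_image)
qed

lemma sublin_exp_nonneg:
  assumes "\<xi> \<in> \<H>" "\<And>\<omega>. \<xi> \<omega> \<ge> 0"
  shows "sublin_exp \<P> \<xi> \<ge> 0"
proof -
  obtain P where P: "P \<in> \<P>"
    using P_nonempty by blast
  have "0 \<le> integral\<^sup>L P \<xi>"
    using assms(2) by simp
  also have "\<dots> \<le> sublin_exp \<P> \<xi>"
    unfolding sublin_exp_def by (rule cSUP_upper[OF P H_bdd[OF assms(1)]])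
  finally show ?thesis .
qed

lemma sublin_exp_nonpos:
  assumes "\<And>\<omega>. \<xi> \<omega> \<le> 0"
  shows "sublin_exp \<P> \<xi> \<le> 0"
  unfolding sublin_exp_def
proof (rule cSUP_least[OF P_nonempty])
  fix P
  show "integral\<^sup>L P \<xi> \<le> 0"
    using Bochner_Integration.integral_nonneg[of P "\<lambda>\<omega>. - \<xi> \<omega>"] assms by simp
qed

lemma peng_indep_sublin_exp_mult:
  assumes indep: "peng_indep \<P> \<H> X Y"
    and f: "f \<in> borel_measurable borel" and g: "g \<in> borel_measurable borel"
    and g_nonneg: "\<And>y. g y \<ge> 0"
    and fX: "(\<lambda>\<omega>. f (X \<omega>)) \<in> \<H>" and gY: "(\<lambda>\<omega>. g (Y \<omega>)) \<in> \<H>"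
    and fXgY: "(\<lambda>\<omega>. f (X \<omega>) * g (Y \<omega>)) \<in> \<H>"
  shows "sublin_exp \<P> (\<lambda>\<omega>. f (X \<omega>) * g (Y \<omega>))
       = sublin_exp \<P> (\<lambda>\<omega>. sublin_exp \<P> (\<lambda>\<omega>. f (X \<omega>)) * g (Y \<omega>))"
proof -
  define \<phi> where "\<phi> = (\<lambda>(y, x). f x * g y)"
  have "\<phi> \<in> borel_measurable (borel \<Otimes>\<^sub>M borel)"
    unfolding \<phi>_def using f g by measurable
  then have \<phi>_borel: "\<phi> \<in> borel_measurable borel"
    by (simp add: borel_prod)
  have inner: "sublin_exp \<P> (\<lambda>\<omega>'. \<phi> (y, X \<omega>')) = sublin_exp \<P> (\<lambda>\<omega>. f (X \<omega>)) * g y" for y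
    using sublin_exp_scale[OF fX g_nonneg[of y]] by (simp add: \<phi>_def mult.commute)
  have "(\<lambda>\<omega>. \<phi> (y, X \<omega>)) \<in> \<H>" for y
    using H_scale[OF fX, of "g y"] by (simp add: \<phi>_def mult.commute)
  moreover have "(\<lambda>\<omega>. sublin_exp \<P> (\<lambda>\<omega>'. \<phi> (Y \<omega>, X \<omega>'))) \<in> \<H>"
    using H_scale[OF gY] by (simp add: inner)
  moreover have "(\<lambda>\<omega>. \<phi> (Y \<omega>, X \<omega>)) \<in> \<H>"
    using fXgY by (simp add: \<phi>_def)
  ultimately have "sublin_exp \<P> (\<lambda>\<omega>. \<phi> (Y \<omega>, X \<omega>))
      = sublin_exp \<P> (\<lambda>\<omega>. sublin_exp \<P> (\<lambda>\<omega>'. \<phi> (Y \<omega>, X \<omega>')))"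
    using indep \<phi>_borel unfolding peng_indep_def by blast
  then show ?thesis
    by (simp only: inner) (simp add: \<phi>_def)
qed

lemma peng_indep_sublin_exp_mult_nonneg:
  assumes "peng_indep \<P> \<H> X Y"
    and "f \<in> borel_measurable borel" "g \<in> borel_measurable borel"
    and f_nonneg: "\<And>x. f x \<ge> 0" and "\<And>y. g y \<ge> 0"
    and fX: "(\<lambda>\<omega>. f (X \<omega>)) \<in> \<H>" and gY: "(\<lambda>\<omega>. g (Y \<omega>)) \<in> \<H>"
    and "(\<lambda>\<omega>. f (X \<omega>) * g (Y \<omega>)) \<in> \<H>"
  shows "sublin_exp \<P> (\<lambda>\<omega>. f (X \<omega>) * g (Y \<omega>))
       = sublin_exp \<P> (\<lambda>\<omega>. f (X \<omega>)) * sublin_exp \<P> (\<lambda>\<omega>. g (Y \<omega>))"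
  using peng_indep_sublin_exp_mult[OF assms(1-3,5-8)]
    sublin_exp_scale[OF gY sublin_exp_nonneg[OF fX f_nonneg]]
  by simp

lemma peng_indep_sublin_exp_mult_nonpos:
  assumes "peng_indep \<P> \<H> X Y"
    and "f \<in> borel_measurable borel" "g \<in> borel_measurable borel"
    and f_nonpos: "\<And>x. f x \<le> 0" and "\<And>y. g y \<ge> 0"
    and "(\<lambda>\<omega>. f (X \<omega>)) \<in> \<H>" and gY: "(\<lambda>\<omega>. g (Y \<omega>)) \<in> \<H>"
    and "(\<lambda>\<omega>. f (X \<omega>) * g (Y \<omega>)) \<in> \<H>"
  shows "sublin_exp \<P> (\<lambda>\<omega>. f (X \<omega>) * g (Y \<omega>))
       = (- sublin_exp \<P> (\<lambda>\<omega>. f (X \<omega>))) * sublin_exp \<P> (\<lambda>\<omega>. - g (Y \<omega>))"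
proof -
  have "- sublin_exp \<P> (\<lambda>\<omega>. f (X \<omega>)) \<ge> 0"
    using sublin_exp_nonpos[of "\<lambda>\<omega>. f (X \<omega>)"] f_nonpos by simp
  moreover have "(\<lambda>\<omega>. - g (Y \<omega>)) \<in> \<H>"
    using H_scale[OF gY, of "-1"] by simp
  ultimately show ?thesis
    using peng_indep_sublin_exp_mult[OF assms(1-3,5-8)]
      sublin_exp_scale[of "\<lambda>\<omega>. - g (Y \<omega>)" "- sublin_exp \<P> (\<lambda>\<omega>. f (X \<omega>))"]
    by simp
qed

end

theorem lemma1:
  fixes M :: "'a measure" and \<P> :: "'a measure set"
    and \<H> :: "('a \<Rightarrow> real) set" and X Y :: "'a \<Rightarrow> real"
  assumes P_nonempty: "\<P> \<noteq> {}"
    and P_prob: "\<And>P. P \<in> \<P> \<Longrightarrow> prob_space P \<and> sets P = sets M"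
    and H_meas: "\<H> \<subseteq> borel_measurable M"
    and H_integrable: "\<And>\<xi> P. \<xi> \<in> \<H> \<Longrightarrow> P \<in> \<P> \<Longrightarrow> integrable P \<xi>"
    and H_bdd: "\<And>\<xi>. \<xi> \<in> \<H> \<Longrightarrow> bdd_above ((\<lambda>P. integral\<^sup>L P \<xi>) ` \<P>)"
    and H_scale: "\<And>c \<xi>. \<xi> \<in> \<H> \<Longrightarrow> (\<lambda>\<omega>. c * \<xi> \<omega>) \<in> \<H>"
    and H_ind: "\<And>D G. D \<in> sets borel \<Longrightarrow> G \<in> sets borel \<Longrightarrow>
        (\<lambda>\<omega>. indicator D (X \<omega>) * indicator G (Y \<omega>)) \<in> \<H> \<and>
        (\<lambda>\<omega>. indicator D (X \<omega>)) \<in> \<H> \<and> (\<lambda>\<omega>. indicator G (Y \<omega>)) \<in> \<H>"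
    and X_H: "X \<in> \<H>" and Y_H: "Y \<in> \<H>"
    and indep: "peng_indep \<P> \<H> X Y"
    and D: "D \<in> sets borel" and G: "G \<in> sets borel"
  shows "upper_cap \<P> {\<omega>\<in>space M. X \<omega> \<in> D \<and> Y \<omega> \<in> G}
           = upper_cap \<P> {\<omega>\<in>space M. X \<omega> \<in> D} * upper_cap \<P> {\<omega>\<in>space M. Y \<omega> \<in> G}
       \<and> lower_cap \<P> {\<omega>\<in>space M. X \<omega> \<in> D \<and> Y \<omega> \<in> G}
           = lower_cap \<P> {\<omega>\<in>space M. X \<omega> \<in> D} * lower_cap \<P> {\<omega>\<in>space M. Y \<omega> \<in> G}"
proof -
  interpret sublinear_expectation_space \<P> \<H>
    using P_nonempty H_bdd H_scale by unfold_locales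
  define iD iG where "iD = (\<lambda>x. indicator D x :: real)" and "iG = (\<lambda>y. indicator G y :: real)"
  have space_eq: "\<And>P. P \<in> \<P> \<Longrightarrow> space P = space M"
    using P_prob sets_eq_imp_space_eq by blast
  have H: "(\<lambda>\<omega>. iD (X \<omega>)) \<in> \<H>" "(\<lambda>\<omega>. iG (Y \<omega>)) \<in> \<H>"
    "(\<lambda>\<omega>. iD (X \<omega>) * iG (Y \<omega>)) \<in> \<H>"
    using H_ind[OF D G] unfolding iD_def iG_def by auto
  have H_neg: "(\<lambda>\<omega>. - iD (X \<omega>)) \<in> \<H>" "(\<lambda>\<omega>. - iD (X \<omega>) * iG (Y \<omega>)) \<in> \<H>"
    using H_scale[OF H(1), of "-1"] H_scale[OF H(3), of "-1"] by simp_all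
  have "sublin_exp \<P> (\<lambda>\<omega>. iD (X \<omega>) * iG (Y \<omega>))
      = sublin_exp \<P> (\<lambda>\<omega>. iD (X \<omega>)) * sublin_exp \<P> (\<lambda>\<omega>. iG (Y \<omega>))"
    by (rule peng_indep_sublin_exp_mult_nonneg[OF indep _ _ _ _ H]) (use D G in \<open>simp_all add: iD_def iG_def\<close>)
  moreover have "sublin_exp \<P> (\<lambda>\<omega>. - iD (X \<omega>) * iG (Y \<omega>))
      = (- sublin_exp \<P> (\<lambda>\<omega>. - iD (X \<omega>))) * sublin_exp \<P> (\<lambda>\<omega>. - iG (Y \<omega>))"
    by (rule peng_indep_sublin_exp_mult_nonpos[OF indep _ _ _ _ H_neg(1) H(2) H_neg(2)])
      (use D G in \<open>simp_all add: iD_def iG_def\<close>)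
  ultimately show ?thesis
    by (simp add: upper_cap_eq_sublin_exp[OF space_eq] lower_cap_eq_sublin_exp[OF space_eq]
        of_bool_conj iD_def iG_def indicator_def)
qed

end
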